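(* Let $C_0>0$, $C_1\ge0$, $p>1$, $q>1$ and $t_0\ge2$, and let $\Phi$ be a real-valued differentiable function on $[t_0,\infty)$ satisfying $$\frac{d\Phi}{dt}(t)\le-\frac{C_0}{t}|\Phi(t)|^p+\frac{C_1}{t^q},\qquad t\ge t_0.$$ Then $$\Phi(t)\le\frac{C_2}{(\log t)^{p^*-1}},\qquad t\ge t_0,$$ where $p^*$ is the H\"older conjugate of $p$ (i.e. $1/p+1/p^*=1$) and $$C_2=\frac1{\log2}\Bigl((\log t_0)^{p^*}\Phi(t_0)+C_1\int_2^\infty\frac{(\log\tau)^{p^*}}{\tau^q}d\tau\Bigr)+\Bigl(\frac{p^*}{C_0p}\Bigr)^{p^*-1}.$$ *)

theory Defs
  imports "HOL-Analysis.Analysis"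
begin

definition holder_conj :: "real \<Rightarrow> real" where
  "holder_conj p = p / (p - 1)"

end

theory Submission
  imports Defs
begin

text \<open>
  Write \<open>w(\<tau>) = (log \<tau>)^{p*} / \<tau>^q\<close> and \<open>K = (p*/(C0 p))^{p*-1}\<close>. Multiplying the inequality
  by \<open>(log t)^{p*}\<close> and absorbing \<open>p* (log t)^{p*-1} \<Phi> / t\<close> into the dissipation
  \<open>C0 (log t)^{p*} |\<Phi>|^p / t\<close> by Young's inequality shows that
  \<open>(log t)^{p*} \<Phi>(t) - K log t - C1 \<integral>\<^sub>t\<^sub>0\<^sup>t w\<close> is nonincreasing. Hence
  \<open>(log t)^{p*} \<Phi>(t) \<le> A + K log t\<close>, where \<open>A\<close> is the bracket in \<open>C2\<close>, and dividing by
  \<open>(log t)^{p*}\<close> gives the claim via \<open>log t \<ge> log 2\<close>, provided \<open>A \<ge> 0\<close>.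
  If \<open>A < 0\<close>, put \<open>c = C1 / (log t0)^{p*}\<close> and \<open>v = -\<Phi> + c \<integral>\<^sub>t\<^sub>0\<^sup>t w - c \<integral>\<^sub>2\<^sup>\<infinity> w\<close>: then
  \<open>v(t0) > 0\<close>, \<open>v \<le> |\<Phi>|\<close> and \<open>v' \<ge> C0 |\<Phi>|^p / t \<ge> C0 v^p / t\<close>, so the positive function
  \<open>v^{1-p} + (p-1) C0 log t\<close> is nonincreasing, which is absurd since \<open>log t\<close> is unbounded.
\<close>

lemma DERIV_within_nonpos_imp_le:
  fixes f f' :: "real \<Rightarrow> real"
  assumes "a \<le> b" and "{a..b} \<subseteq> S"
    and deriv: "\<And>x. x \<in> {a..b} \<Longrightarrow> (f has_real_derivative f' x) (at x within S)"
    and nonpos: "\<And>x. a < x \<Longrightarrow> x < b \<Longrightarrow> f' x \<le> 0"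
  shows "f b \<le> f a"
proof (rule DERIV_nonpos_imp_decreasing_open[OF \<open>a \<le> b\<close>])
  fix x assume x: "a < x" "x < b"
  have "(f has_real_derivative f' x) (at x within {a<..<b})"
    using x \<open>{a..b} \<subseteq> S\<close>
    by (intro has_field_derivative_subset[OF deriv[of x]]) auto
  then have "(f has_real_derivative f' x) (at x)"
    using x at_within_open[of x "{a<..<b}"] by simp
  then show "\<exists>y. (f has_real_derivative y) (at x) \<and> y \<le> 0"
    using nonpos x by blast
next
  show "continuous_on {a..b} f"
    unfolding continuous_on_eq_continuous_within
    using deriv DERIV_continuous continuous_within_subset \<open>{a..b} \<subseteq> S\<close> by blast
qed

lemma DERIV_within_nonneg_imp_le:
  fixes f f' :: "real \<Rightarrow> real"
  assumes "a \<le> b" and "{a..b} \<subseteq> S"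
    and deriv: "\<And>x. x \<in> {a..b} \<Longrightarrow> (f has_real_derivative f' x) (at x within S)"
    and nonneg: "\<And>x. a < x \<Longrightarrow> x < b \<Longrightarrow> f' x \<ge> 0"
  shows "f a \<le> f b"
  using DERIV_within_nonpos_imp_le[of a b S "\<lambda>x. - f x" "\<lambda>x. - f' x"] assms
  by (auto intro: derivative_intros)

lemma Youngs_inequality_holder_conj:
  fixes p C0 L x :: real
  assumes p: "p > 1" and C0: "C0 > 0" and L: "L > 0" and x: "x \<ge> 0"
  shows "holder_conj p * L powr (holder_conj p - 1) * x
     \<le> C0 * L powr (holder_conj p) * x powr p
       + (holder_conj p / (C0 * p)) powr (holder_conj p - 1)"
proof -
  define s where "s = holder_conj p"
  have s: "s = p / (p - 1)" by (simp add: s_def holder_conj_def)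
  have s1: "s > 1" using p by (simp add: s field_simps)
  have conj: "1/p + 1/s = 1" using p by (simp add: s field_simps)
  have sp: "s / p = s - 1" using p by (simp add: s field_simps)
  define M where "M = C0 * p * L powr s"
  have M: "M > 0" using p C0 L by (simp add: M_def)
  define a where "a = x * M powr (1/p)"
  define b where "b = s * L powr (s-1) * M powr (-1/p)"
  have a0: "a \<ge> 0" using x by (simp add: a_def)
  have b0: "b \<ge> 0" using s1 by (simp add: b_def)
  have ab: "a * b = s * L powr (s-1) * x"
    using M by (simp add: a_def b_def powr_minus powr_divide field_simps)
  have ap: "a powr p / p = C0 * L powr s * x powr p"
    using M x p C0 by (simp add: a_def powr_mult powr_powr M_def)
  have "b powr s = s powr s * L powr (s * (s - 1)) * M powr (-(s/p))"
    using M s1 L by (simp add: b_def powr_mult powr_powr mult.commute)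
  also have "M powr (-(s/p)) = (C0*p) powr (-(s/p)) * L powr (s * (-(s/p)))"
    using C0 p L by (simp add: M_def powr_mult powr_powr)
  also have "\<dots> = (C0*p) powr (-(s-1)) * L powr (-(s*(s-1)))"
    using sp by (metis minus_mult_right)
  finally have "b powr s = s powr s * (C0*p) powr (-(s-1))"
    using L by (simp add: algebra_simps powr_add[symmetric])
  then have bs: "b powr s / s = (s / (C0*p)) powr (s-1)"
    using s1 C0 p by (simp add: powr_divide powr_minus powr_diff field_simps)
  have "a * b \<le> a powr p / p + b powr s / s"
    by (rule Youngs_inequality[OF p s1 conj a0 b0])
  then show ?thesis using ab ap bs by (simp add: s_def)
qed

lemma ln_powr_div_powr_integrable_on:
  fixes a s q :: real
  assumes a: "a > 1" and q: "q > 1" and s: "s > 0"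
  shows "(\<lambda>\<tau>. ln \<tau> powr s / \<tau> powr q) integrable_on {a..}"
proof (rule integrable_on_all_intervals_integrable_bound)
  fix c d :: real
  have "(\<lambda>\<tau>. ln \<tau> powr s / \<tau> powr q) integrable_on {max a c..d}"
    using a by (intro integrable_continuous_interval continuous_intros) auto
  moreover have "{a..} \<inter> cbox c d = {max a c..d}" by auto
  ultimately show "(\<lambda>x. if x \<in> {a..} then ln x powr s / x powr q else 0) integrable_on cbox c d"
    unfolding integrable_restrict_Int by simp
next
  txt \<open>Since \<open>e log x \<le> x^e\<close>, this \<open>e\<close> bounds the integrand by a multiple of \<open>x^{-(q+1)/2}\<close>.\<close>
  define e where "e = (q - 1) / (2 * s)"
  have e: "e > 0" using q s by (simp add: e_def)
  have es: "e * s - q = -(q+1)/2" using s by (simp add: e_def field_simps)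
  show "(\<lambda>x. x powr (-(q+1)/2) / e powr s) integrable_on {a..}"
    using has_integral_powr_to_inf[of "-(q+1)/2" a] q a
    by (intro integrable_on_divide) (auto simp: integrable_on_def)
  fix x :: real assume "x \<in> {a..}"
  then have x: "x > 1" using a by simp
  have "e * ln x = ln (x powr e)" using x by (simp add: ln_powr)
  also have "\<dots> \<le> x powr e - 1" using x by (intro ln_le_minus_one) auto
  finally have "ln x \<le> x powr e / e" using e by (simp add: field_simps)
  then have "ln x powr s \<le> (x powr e / e) powr s"
    using x s by (intro powr_mono2) auto
  also have "\<dots> = x powr (e * s) / e powr s"
    using x e by (simp add: powr_divide powr_powr)
  finally have "ln x powr s / x powr q \<le> x powr (e * s) / e powr s / x powr q"
    using x by (intro divide_right_mono) auto
  also have "\<dots> = x powr (e * s - q) / e powr s"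
    using x by (simp add: powr_diff)
  finally show "norm (ln x powr s / x powr q) \<le> x powr (-(q+1)/2) / e powr s"
    using es by simp
qed

lemma superlinear_inequality_no_global_solution:
  fixes v v' :: "real \<Rightarrow> real" and a p t0 :: real
  assumes t0: "t0 > 0" and p: "p > 1" and a: "a > 0" and v0: "v t0 > 0"
    and deriv: "\<And>x. x \<ge> t0 \<Longrightarrow> (v has_real_derivative v' x) (at x within {t0..})"
    and growth: "\<And>x. x \<ge> t0 \<Longrightarrow> a / x * v x powr p \<le> v' x"
  shows False
proof -
  have v_pos: "v x > 0" if "x \<ge> t0" for x
  proof -
    have "v t0 \<le> v x"
    proof (rule DERIV_within_nonneg_imp_le[OF that _ deriv])
      show "v' y \<ge> 0" if "t0 < y" for y
        using that t0 a by (intro order_trans[OF _ growth[of y]]) auto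
    qed auto
    with v0 show ?thesis by simp
  qed
  define k where "k = (p - 1) * a"
  have k: "k > 0" using p a by (simp add: k_def)
  define w where "w x = v x powr (1 - p) + k * ln x" for x
  txt \<open>At \<open>T\<close> the term \<open>k ln x\<close> alone exceeds \<open>w t0\<close>, while \<open>w\<close> is nonincreasing.\<close>
  define T where "T = exp (ln t0 + v t0 powr (1 - p) / k + 1)"
  have "t0 \<le> T"
  proof -
    have "t0 = exp (ln t0)" using t0 by simp
    also have "\<dots> \<le> T" unfolding T_def using k by simp
    finally show ?thesis .
  qed
  have "w T \<le> w t0"
  proof (rule DERIV_within_nonpos_imp_le[OF \<open>t0 \<le> T\<close>, of "{t0..}"])
    show "(w has_real_derivative (1 - p) * v y powr (- p) * v' y + k / y) (at y within {t0..})"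
      if "y \<in> {t0..T}" for y
    proof -
      have y: "y > 0" "v y > 0" using that t0 v_pos by auto
      have "((\<lambda>x. v x powr (1 - p)) has_real_derivative (1 - p) * v y powr (1 - p - 1) * v' y)
          (at y within {t0..})"
        using that by (intro DERIV_chain'[OF deriv has_real_derivative_powr[OF y(2)]]) auto
      moreover have "(ln has_real_derivative inverse y) (at y within {t0..})"
        by (rule has_field_derivative_at_within[OF DERIV_ln[OF y(1)]])
      ultimately show ?thesis
        unfolding w_def using DERIV_add DERIV_cmult by (fastforce simp: divide_inverse)
    qed
    show "(1 - p) * v y powr (- p) * v' y + k / y \<le> 0" if "t0 < y" "y < T" for y
    proof -
      have y: "y > 0" "v y > 0" using that t0 v_pos by auto
      have "(1 - p) * v y powr (- p) * v' y \<le> (1 - p) * v y powr (- p) * (a / y * v y powr p)"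
        using growth[of y] that p by (intro mult_left_mono_neg) (auto intro: mult_nonpos_nonneg)
      also have "\<dots> = - k / y"
        using y by (simp add: k_def powr_minus field_simps)
      finally show ?thesis by simp
    qed
  qed auto
  then have "v T powr (1 - p) \<le> - k"
    using k by (simp add: w_def T_def distrib_left)
  then show False
    using k powr_ge_zero[of "v T" "1 - p"] by linarith
qed

locale log_dissipative_inequality =
  fixes \<Phi> \<Phi>' :: "real \<Rightarrow> real" and C0 C1 p q t0 :: real
  assumes C0_pos: "C0 > 0" and C1_nonneg: "C1 \<ge> 0" and p_gt_1: "p > 1" and q_gt_1: "q > 1"
    and t0_ge_2: "t0 \<ge> 2"
    and \<Phi>_deriv: "\<And>t. t \<ge> t0 \<Longrightarrow> (\<Phi> has_real_derivative \<Phi>' t) (at t within {t0..})"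
    and \<Phi>'_le: "\<And>t. t \<ge> t0 \<Longrightarrow> \<Phi>' t \<le> - (C0 / t) * \<bar>\<Phi> t\<bar> powr p + C1 / t powr q"
begin

abbreviation p_star :: real where
  "p_star \<equiv> holder_conj p"

definition weight :: "real \<Rightarrow> real" where
  "weight \<tau> = ln \<tau> powr p_star / \<tau> powr q"

definition young_const :: real where
  "young_const = (p_star / (C0 * p)) powr (p_star - 1)"

definition initial_data :: real where
  "initial_data = ln t0 powr p_star * \<Phi> t0 + C1 * integral {2..} weight"

lemma p_star_gt_1: "p_star > 1"
  using p_gt_1 by (simp add: holder_conj_def field_simps)

lemma ln_t0_pos: "ln t0 > 0"
  using t0_ge_2 by simp

lemma weight_nonneg: "weight \<tau> \<ge> 0"
  by (simp add: weight_def)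

lemma continuous_on_weight: "continuous_on {t0..T} weight"
  unfolding weight_def using t0_ge_2 by (intro continuous_intros) auto

lemma weight_integrable: "weight integrable_on {2..}"
  unfolding weight_def using q_gt_1 p_star_gt_1
  by (intro ln_powr_div_powr_integrable_on) auto

lemma integral_weight_le: "integral {t0..t} weight \<le> integral {2..} weight"
proof (cases "t0 \<le> t")
  case True
  then show ?thesis
    using t0_ge_2 weight_integrable weight_nonneg
      integrable_continuous_interval[OF continuous_on_weight[of t]]
    by (intro integral_subset_le) auto
next
  case False
  then show ?thesis
    using weight_integrable weight_nonneg by (simp add: integral_nonneg)
qed

lemma integral_weight_has_derivative:
  assumes "x \<ge> t0"
  shows "((\<lambda>y. integral {t0..y} weight) has_real_derivative weight x) (at x within {t0..})"
proof -
  have "((\<lambda>y. integral {t0..y} weight) has_real_derivative weight x) (at x within {t0..x+1})"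
    using assms by (intro integral_has_real_derivative continuous_on_weight) auto
  moreover have "at x within {t0..x+1} = at x within {t0..}"
    by (rule at_within_nhd[of x "{..<x+1}"]) auto
  ultimately show ?thesis by simp
qed

lemma dissipation_dominates:
  assumes "x \<ge> t0"
  shows "p_star * ln x powr (p_star - 1) / x * \<Phi> x + ln x powr p_star * \<Phi>' x
    \<le> young_const / x + C1 * weight x"
proof -
  have x: "x > 0" "ln x > 0" using assms t0_ge_2 by auto
  define Q where "Q = C0 * ln x powr p_star * \<bar>\<Phi> x\<bar> powr p"
  have "p_star * ln x powr (p_star - 1) * \<Phi> x \<le> p_star * ln x powr (p_star - 1) * \<bar>\<Phi> x\<bar>"
    using p_star_gt_1 by (intro mult_left_mono) auto
  also have "\<dots> \<le> Q + young_const"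
    unfolding Q_def young_const_def
    using Youngs_inequality_holder_conj[OF p_gt_1 C0_pos x(2)] by simp
  finally have "p_star * ln x powr (p_star - 1) / x * \<Phi> x \<le> Q / x + young_const / x"
    using x by (simp add: divide_right_mono add_divide_distrib[symmetric])
  moreover have "ln x powr p_star * \<Phi>' x
      \<le> ln x powr p_star * (- (C0 / x) * \<bar>\<Phi> x\<bar> powr p + C1 / x powr q)"
    using \<Phi>'_le[OF assms] by (intro mult_left_mono) auto
  moreover have "\<dots> = - (Q / x) + C1 * weight x"
    using x by (simp add: Q_def weight_def field_simps)
  ultimately show ?thesis by linarith
qed

lemma energy_antimono:
  assumes "t \<ge> t0"
  shows "ln t powr p_star * \<Phi> t - young_const * ln t - C1 * integral {t0..t} weight
    \<le> ln t0 powr p_star * \<Phi> t0 - young_const * ln t0"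
proof -
  define F where
    "F x = ln x powr p_star * \<Phi> x - young_const * ln x - C1 * integral {t0..x} weight" for x
  define F' where
    "F' x = p_star * ln x powr (p_star - 1) / x * \<Phi> x + ln x powr p_star * \<Phi>' x
      - young_const / x - C1 * weight x" for x
  have "F t \<le> F t0"
  proof (rule DERIV_within_nonpos_imp_le[OF assms, of "{t0..}"])
    show "(F has_real_derivative F' x) (at x within {t0..})" if "x \<in> {t0..t}" for x
    proof -
      have x: "x \<ge> t0" "x > 0" "ln x > 0" using that t0_ge_2 by auto
      show ?thesis
        unfolding F_def F'_def using x
        by (auto intro!: derivative_eq_intros \<Phi>_deriv integral_weight_has_derivative x(1)
            simp: field_simps)
    qed
    show "F' x \<le> 0" if "t0 < x" for x
      using dissipation_dominates[of x] that by (simp add: F'_def)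
  qed auto
  then show ?thesis
    by (simp add: F_def)
qed

lemma energy_bound:
  assumes "t \<ge> t0"
  shows "ln t powr p_star * \<Phi> t \<le> initial_data + young_const * ln t"
proof -
  have "C1 * integral {t0..t} weight \<le> C1 * integral {2..} weight"
    using integral_weight_le C1_nonneg by (rule mult_left_mono)
  moreover have "young_const * ln t0 \<ge> 0"
    using ln_t0_pos by (simp add: young_const_def)
  ultimately show ?thesis
    using energy_antimono[OF assms] unfolding initial_data_def by linarith
qed

lemma initial_data_nonneg: "initial_data \<ge> 0"
proof (rule ccontr)
  assume "\<not> initial_data \<ge> 0"
  define c where "c = C1 / ln t0 powr p_star"
  have c: "c \<ge> 0" using C1_nonneg by (simp add: c_def)
  define v where "v x = - \<Phi> x + c * integral {t0..x} weight - c * integral {2..} weight" for x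
  define v' where "v' x = - \<Phi>' x + c * weight x" for x
  have v_t0: "v t0 > 0"
  proof -
    have "ln t0 powr p_star * \<Phi> t0 < - (C1 * integral {2..} weight)"
      using \<open>\<not> initial_data \<ge> 0\<close> by (simp add: initial_data_def)
    then have "\<Phi> t0 < - c * integral {2..} weight"
      using ln_t0_pos by (simp add: c_def field_simps)
    then show ?thesis by (simp add: v_def)
  qed
  have v_deriv: "(v has_real_derivative v' x) (at x within {t0..})" if "x \<ge> t0" for x
    unfolding v_def v'_def using that
    by (auto intro!: derivative_eq_intros \<Phi>_deriv integral_weight_has_derivative)
  have v'_ge: "C0 / x * \<bar>\<Phi> x\<bar> powr p \<le> v' x" if "x \<ge> t0" for x
  proof -
    have "ln t0 powr p_star \<le> ln x powr p_star"
      using that t0_ge_2 ln_t0_pos p_star_gt_1 by (intro powr_mono2) auto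
    then have "1 \<le> ln x powr p_star / ln t0 powr p_star"
      using ln_t0_pos by simp
    then have "C1 / x powr q * 1 \<le> C1 / x powr q * (ln x powr p_star / ln t0 powr p_star)"
      using C1_nonneg by (intro mult_left_mono) auto
    then have "C1 / x powr q \<le> c * weight x"
      by (simp add: c_def weight_def mult.commute)
    then show ?thesis using \<Phi>'_le[OF that] by (simp add: v'_def)
  qed
  have v_pos: "v x > 0" if "x \<ge> t0" for x
  proof -
    have "v t0 \<le> v x"
    proof (rule DERIV_within_nonneg_imp_le[OF that _ v_deriv])
      show "v' y \<ge> 0" if "t0 < y" for y
        using that t0_ge_2 C0_pos by (intro order_trans[OF _ v'_ge[of y]]) auto
    qed auto
    with v_t0 show ?thesis by simp
  qed
  have v_le: "v x \<le> \<bar>\<Phi> x\<bar>" for x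
    using mult_left_mono[OF integral_weight_le[of x] c] by (simp add: v_def)
  show False
  proof (rule superlinear_inequality_no_global_solution[OF _ p_gt_1 C0_pos v_t0 v_deriv])
    show "C0 / x * v x powr p \<le> v' x" if "x \<ge> t0" for x
    proof -
      have "v x powr p \<le> \<bar>\<Phi> x\<bar> powr p"
        using v_pos[OF that] v_le p_gt_1 by (intro powr_mono2) auto
      then have "C0 / x * v x powr p \<le> C0 / x * \<bar>\<Phi> x\<bar> powr p"
        using that t0_ge_2 C0_pos by (intro mult_left_mono) auto
      then show ?thesis using v'_ge[OF that] by linarith
    qed
  qed (use t0_ge_2 in auto)
qed

lemma log_decay:
  assumes "t \<ge> t0"
  shows "\<Phi> t \<le> (1 / ln 2 * initial_data + young_const) / ln t powr (p_star - 1)"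
proof -
  have L: "ln t \<ge> ln 2" "ln t > 0"
    using assms t0_ge_2 by auto
  have "initial_data \<le> initial_data * (ln t / ln 2)"
    using mult_left_mono[OF _ initial_data_nonneg, of 1 "ln t / ln 2"] L by simp
  then have "ln t * (ln t powr (p_star - 1) * \<Phi> t) \<le> ln t * (1 / ln 2 * initial_data + young_const)"
    using energy_bound[OF assms] L powr_add[of "ln t" 1 "p_star - 1"]
    by (simp add: algebra_simps)
  then show ?thesis
    using L by (simp add: pos_le_divide_eq mult.commute)
qed

end

theorem lemma4p1:
  fixes \<Phi> \<Phi>' :: "real \<Rightarrow> real" and C0 C1 p q t0 :: real
  assumes "C0 > 0" and "C1 \<ge> 0" and "p > 1" and "q > 1" and "t0 \<ge> 2"
    and deriv: "\<And>t. t \<ge> t0 \<Longrightarrow> (\<Phi> has_real_derivative \<Phi>' t) (at t within {t0..})"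
    and ineq: "\<And>t. t \<ge> t0 \<Longrightarrow> \<Phi>' t \<le> - (C0 / t) * \<bar>\<Phi> t\<bar> powr p + C1 / t powr q"
  shows "\<forall>t\<ge>t0. \<Phi> t \<le>
     (1 / ln 2 * ((ln t0) powr (holder_conj p) * \<Phi> t0
        + C1 * integral {2..} (\<lambda>\<tau>. (ln \<tau>) powr (holder_conj p) / \<tau> powr q))
      + (holder_conj p / (C0 * p)) powr (holder_conj p - 1))
     / (ln t) powr (holder_conj p - 1)"
proof -
  interpret log_dissipative_inequality \<Phi> \<Phi>' C0 C1 p q t0
    using assms by unfold_locales auto
  show ?thesis
    using log_decay unfolding initial_data_def young_const_def weight_def[abs_def] by blast
qed

end
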